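(* Let $(\mathbf x,\mathbf p,\mu)$ be a deterministic TFM satisfying weak UIC and $2$-weak-SCP, and let $\mathbf b=(b_1,\dots,b_m)$ be a bid vector. Suppose there are three distinct users $i,j,k$ such that $x_i(\mathbf b_{-k},0)=x_j(\mathbf b_{-k},0)=1$, $b_i-p(\mathbf b_{-k},0)>b_k$ and $b_j-p(\mathbf b_{-k},0)>b_k$. Then $x_i(\mathbf b)=x_j(\mathbf b)=1$ and $p(\mathbf b)\le p(\mathbf b_{-k},0)+b_k/2$.
   Context: Setting (TFM). Each user $i$ has a true value $v_i\ge0$ and submits a single bid $b_i\ge0$; $\mathbf b=(b_1,\dots,b_m)$, $(\mathbf b_{-k},0)$ the vector with user $k$'s bid replaced by $0$. A TFM has an inclusion rule (run by the miner, choosing at most $B$ bids) and confirmation, payment, miner-revenue rules (run by the blockchain on included bids); the mechanism treats users symmetrically. Composing the honest inclusion rule with the others gives deterministic $(\mathbf x,\mathbf p,\mu)$: $x_i(\mathbf b)\in\{0,1\}$ indicates confirmation, $p_i(\mathbf b)\le b_i$ the payment ($0$ if unconfirmed), $\mu(\mathbf b)$ the miner revenue. Strategic players (a user, the miner, or the miner with some users) may bid untruthfully after seeing all bids, inject fake bids (true value $0$), and (if the miner is involved) include any at most $B$ available bids. Weak ($1$-strict) utility: miner revenue (if the miner is in the player) plus $v-p$ for each confirmed transaction of the player (true value $v$, payment $p$), minus $(b-v)$ for each unconfirmed transaction of the player with bid $b>v$. Weak UIC: with an honest miner, each user's weak utility is maximized by truthful bidding without fake bids, whatever the other bids. $c$-weak-SCP: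 for every coalition of the miner with between $1$ and $c$ users, joint weak utility is maximized by truthful bidding and honest miner behavior, whatever the other bids. Universal payment: for mechanisms satisfying weak UIC and $2$-weak-SCP, all users confirmed under $\mathbf b$ pay the same amount; $p(\mathbf b)$ denotes this common payment, and $p(\mathbf b)=0$ if no user is confirmed under $\mathbf b$. *)

theory Defs
  imports Complex_Main "HOL-Combinatorics.Permutations"
begin

text \<open>Bid vectors are lists of reals;
users are identified with positions in the bid vector.
  blk : block size B
  incl: honest inclusion rule (run by the miner), returns the set of included positions
  conf, pay, rev: confirmation, payment and miner-revenue rules run by the blockchain
        on the list of included bids (in the order of their positions).\<close>

record tfm =
  blk  :: nat
  incl :: "real list \<Rightarrow> nat set"
  conf :: "real list \<Rightarrow> nat \<Rightarrow> bool"
  pay  :: "real list \<Rightarrow> nat \<Rightarrow> real"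
  rev  :: "real list \<Rightarrow> real"

definition valid_bids :: "real list \<Rightarrow> bool" where
  "valid_bids b \<longleftrightarrow> (\<forall>x\<in>set b. 0 \<le> x)"

definition tfm_wf :: "tfm \<Rightarrow> bool" where
  "tfm_wf M \<longleftrightarrow>
     (\<forall>b. valid_bids b \<longrightarrow> incl M b \<subseteq> {..<length b} \<and> card (incl M b) \<le> blk M) \<and>
     (\<forall>L j. valid_bids L \<and> length L \<le> blk M \<and> j < length L \<longrightarrow>
          pay M L j \<le> L ! j \<and> (\<not> conf M L j \<longrightarrow> pay M L j = 0)) \<and>
     (\<forall>b \<sigma>. valid_bids b \<and> \<sigma> permutes {..<length b} \<longrightarrow>
          incl M (permute_list \<sigma> b) = {i. i < length b \<and> \<sigma> i \<in> incl M b}) \<and>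
     (\<forall>L \<sigma>. valid_bids L \<and> length L \<le> blk M \<and> \<sigma> permutes {..<length L} \<longrightarrow>
          rev M (permute_list \<sigma> L) = rev M L \<and>
          (\<forall>j < length L. conf M (permute_list \<sigma> L) j = conf M L (\<sigma> j) \<and>
                          pay M (permute_list \<sigma> L) j = pay M L (\<sigma> j)))"

text \<open>Outcome when the bids with positions in S are included (S chosen by the miner).\<close>

definition incl_list :: "real list \<Rightarrow> nat set \<Rightarrow> real list" where
  "incl_list b S = map (\<lambda>i. b ! i) (sorted_list_of_set S)"

definition pos_in :: "nat set \<Rightarrow> nat \<Rightarrow> nat" where
  "pos_in S i = card {j\<in>S. j < i}"

definition conf_at :: "tfm \<Rightarrow> real list \<Rightarrow> nat set \<Rightarrow> nat \<Rightarrow> bool" where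
  "conf_at M b S i \<longleftrightarrow> i \<in> S \<and> conf M (incl_list b S) (pos_in S i)"

definition pay_at :: "tfm \<Rightarrow> real list \<Rightarrow> nat set \<Rightarrow> nat \<Rightarrow> real" where
  "pay_at M b S i = (if conf_at M b S i then pay M (incl_list b S) (pos_in S i) else 0)"

definition rev_at :: "tfm \<Rightarrow> real list \<Rightarrow> nat set \<Rightarrow> real" where
  "rev_at M b S = rev M (incl_list b S)"

text \<open>The composed mechanism (x, p, mu) with the honest inclusion rule.\<close>

definition xconf :: "tfm \<Rightarrow> real list \<Rightarrow> nat \<Rightarrow> bool" where
  "xconf M b i = conf_at M b (incl M b) i"

definition ppay :: "tfm \<Rightarrow> real list \<Rightarrow> nat \<Rightarrow> real" where
  "ppay M b i = pay_at M b (incl M b) i"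

definition mu :: "tfm \<Rightarrow> real list \<Rightarrow> real" where
  "mu M b = rev_at M b (incl M b)"

text \<open>Universal payment p(b): the payment of a confirmed user (all confirmed users pay
the same under weak UIC and 2-weak-SCP), and 0 if nobody is confirmed.\<close>

definition upay :: "tfm \<Rightarrow> real list \<Rightarrow> real" where
  "upay M b = (if \<exists>i < length b. xconf M b i
               then ppay M b (SOME i. i < length b \<and> xconf M b i) else 0)"

text \<open>Weak (1-strict) utility of a strategic player controlling the transactions at
positions T of the submitted vector b (true values v), with included set S.\<close>

definition tx_util :: "real \<Rightarrow> real \<Rightarrow> bool \<Rightarrow> real \<Rightarrow> real" where
  "tx_util v bid c p = (if c then v - p else - max 0 (bid - v))"

definition weak_util ::
  "tfm \<Rightarrow> bool \<Rightarrow> (nat \<Rightarrow> real) \<Rightarrow> nat set \<Rightarrow> real list \<Rightarrow> nat set \<Rightarrow> real" where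
  "weak_util M miner v T b S =
     (if miner then rev_at M b S else 0) +
     (\<Sum>i\<in>T. tx_util (v i) (b ! i) (conf_at M b S i) (pay_at M b S i))"

definition deviate :: "real list \<Rightarrow> nat set \<Rightarrow> (nat \<Rightarrow> real) \<Rightarrow> real list \<Rightarrow> real list" where
  "deviate b C d f = map (\<lambda>i. if i \<in> C then d i else b ! i) [0..<length b] @ f"

text \<open>True values: real users' true values are their truthful bids in b; fake bids have value 0.\<close>

definition true_vals :: "real list \<Rightarrow> nat \<Rightarrow> real" where
  "true_vals b i = (if i < length b then b ! i else 0)"

definition weak_UIC :: "tfm \<Rightarrow> bool" where
  "weak_UIC M \<longleftrightarrow>
    (\<forall>b i d f. valid_bids b \<and> i < length b \<and> (\<forall>j. 0 \<le> d j) \<and> valid_bids f \<longrightarrow>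
       (let b' = deviate b {i} d f in
        weak_util M False (true_vals b) ({i} \<union> {length b..<length b'}) b' (incl M b')
          \<le> weak_util M False (true_vals b) {i} b (incl M b)))"

definition weak_SCP :: "tfm \<Rightarrow> nat \<Rightarrow> bool" where
  "weak_SCP M c \<longleftrightarrow>
    (\<forall>b C d f S. valid_bids b \<and> C \<subseteq> {..<length b} \<and> 1 \<le> card C \<and> card C \<le> c \<and>
       (\<forall>j. 0 \<le> d j) \<and> valid_bids f \<and>
       S \<subseteq> {..<length (deviate b C d f)} \<and> card S \<le> blk M \<longrightarrow>
       (let b' = deviate b C d f in
        weak_util M True (true_vals b) (C \<union> {length b..<length b'}) b' S
          \<le> weak_util M True (true_vals b) C b (incl M b)))"

end

theory Submission
  imports Defs
begin

text \<open>
  Outcomes depend only on the multiset of included bids, and a user's outcome only on her own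
  bid. Weak UIC keeps a confirmed user's payment fixed when she raises her bid; raising the
  lower of two confirmed bids to the higher one and comparing the miner's coalitions with one
  and with both users in the two vectors yields the universal payment.

  Write b' = b[k := 0] and p, p' for the universal payments of b and b'. The miner with a user
  of true value 0 bidding b ! k must not gain by bidding 0 instead, so the miner's revenue in b
  plus k's weak utility in b is at most the revenue in b' minus k's payment in b'. Conversely,
  the miner with i and k (true value b ! k) must not gain by letting k bid 0; hence i's utility
  in b is at least b ! i - p' - b ! k > 0, and i, like j, is confirmed in b. Finally, the miner
  with i and j may inject a fake bid 0 and include it instead of k's bid, reproducing the
  outcome of b' at the cost of k's payment. Together with the first inequality this gives 2 p
  \<le> 2 p' + b ! k if k is unconfirmed in b, and p \<le> 2 p' with p \<le> b ! k otherwise.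
\<close>

lemma pos_in_sorted_list_of_set:
  assumes "finite S" "t \<in> S"
  shows "pos_in S t < card S" and "sorted_list_of_set S ! pos_in S t = t"
proof -
  define xs where "xs = sorted_list_of_set S"
  have sorted: "sorted_wrt (<) xs" and set_xs: "set xs = S"
    and distinct: "distinct xs" and len: "length xs = card S"
    using assms(1) by (simp_all add: xs_def)
  obtain a where a: "a < length xs" "xs ! a = t"
    using assms(2) set_xs by (metis in_set_conv_nth)
  have "{j \<in> S. j < t} = nth xs ` {..<a}"
  proof (intro equalityI subsetI)
    fix j assume "j \<in> {j \<in> S. j < t}"
    then obtain q where "q < length xs" "xs ! q = j" "j < t"
      using set_xs by (auto simp: in_set_conv_nth)
    moreover have "\<not> a < q" if "q < length xs" "xs ! q < t"
      using that sorted_wrt_nth_less[OF sorted, of a q] a by auto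
    ultimately show "j \<in> nth xs ` {..<a}"
      using a by (metis lessThan_iff image_eqI linorder_neqE_nat order.irrefl)
  next
    fix j assume "j \<in> nth xs ` {..<a}"
    then show "j \<in> {j \<in> S. j < t}"
      using a set_xs sorted_wrt_nth_less[OF sorted] by auto
  qed
  moreover have "inj_on (nth xs) {..<a}"
    using distinct a(1) by (intro inj_on_nth) auto
  ultimately have "pos_in S t = a"
    by (simp add: pos_in_def card_image)
  then show "pos_in S t < card S" and "sorted_list_of_set S ! pos_in S t = t"
    using a len xs_def by auto
qed

lemma length_incl_list [simp]: "length (incl_list c S) = card S"
  by (simp add: incl_list_def)

lemma nth_incl_list_pos_in:
  assumes "finite S" "t \<in> S"
  shows "pos_in S t < length (incl_list c S)" and "incl_list c S ! pos_in S t = c ! t"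
  using pos_in_sorted_list_of_set[OF assms] by (simp_all add: incl_list_def)

lemma mset_incl_list:
  "finite S \<Longrightarrow> mset (incl_list c S) = image_mset (nth c) (mset_set S)"
  by (simp add: incl_list_def) (metis mset_sorted_list_of_multiset sorted_list_of_mset_set)

lemma valid_bids_incl_list:
  "valid_bids c \<Longrightarrow> S \<subseteq> {..<length c} \<Longrightarrow> valid_bids (incl_list c S)"
  by (auto simp: valid_bids_def incl_list_def subset_iff finite_subset[of S "{..<length c}"])

lemma valid_bids_update: "valid_bids c \<Longrightarrow> 0 \<le> y \<Longrightarrow> valid_bids (c[l := y])"
  unfolding valid_bids_def using set_update_subset_insert by fastforce

lemma valid_bids_nth_nonneg: "valid_bids c \<Longrightarrow> l < length c \<Longrightarrow> 0 \<le> c ! l"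
  by (simp add: valid_bids_def)

lemma tfm_wf_incl:
  assumes "tfm_wf M" "valid_bids b"
  shows "incl M b \<subseteq> {..<length b}" and "card (incl M b) \<le> blk M"
  using assms by (simp_all add: tfm_wf_def)

lemma tfm_wf_pay_le_bid:
  assumes "tfm_wf M" "valid_bids L" "length L \<le> blk M" "j < length L"
  shows "pay M L j \<le> L ! j"
  using assms by (simp add: tfm_wf_def)

lemma tfm_wf_incl_permute:
  assumes "tfm_wf M" "valid_bids b" "\<sigma> permutes {..<length b}"
  shows "incl M (permute_list \<sigma> b) = {i. i < length b \<and> \<sigma> i \<in> incl M b}"
  using assms unfolding tfm_wf_def by blast

lemma tfm_wf_outcome_permute:
  assumes "tfm_wf M" "valid_bids L" "length L \<le> blk M" "\<sigma> permutes {..<length L}"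
  shows "rev M (permute_list \<sigma> L) = rev M L"
    and "j < length L \<Longrightarrow> conf M (permute_list \<sigma> L) j = conf M L (\<sigma> j)"
    and "j < length L \<Longrightarrow> pay M (permute_list \<sigma> L) j = pay M L (\<sigma> j)"
  using assms unfolding tfm_wf_def by blast+

lemma permute_list_transpose_eq:
  assumes "a < length xs" "a' < length xs" "xs ! a = xs ! a'"
  shows "permute_list (transpose a a') xs = xs"
proof (rule nth_equalityI)
  fix q assume "q < length (permute_list (transpose a a') xs)"
  then show "permute_list (transpose a a') xs ! q = xs ! q"
    using assms by (simp add: permute_list_nth permutes_swap_id transpose_def)
qed simp

lemma outcome_equal_bids:
  assumes wf: "tfm_wf M" and L: "valid_bids L" "length L \<le> blk M"
    and a: "a < length L" "a' < length L" "L ! a = L ! a'"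
  shows "conf M L a = conf M L a'" and "pay M L a = pay M L a'"
proof -
  have \<sigma>: "transpose a a' permutes {..<length L}"
    using a by (intro permutes_swap_id) auto
  note perm = tfm_wf_outcome_permute(2,3)[OF wf L \<sigma> a(1)]
  show "conf M L a = conf M L a'" "pay M L a = pay M L a'"
    using perm unfolding permute_list_transpose_eq[OF a] by simp_all
qed

lemma outcome_mset_eq:
  assumes wf: "tfm_wf M" and L1: "valid_bids L1" "length L1 \<le> blk M"
    and mset_eq: "mset L1 = mset L2"
  shows "rev M L2 = rev M L1"
    and "a < length L2 \<Longrightarrow> a' < length L1 \<Longrightarrow> L2 ! a = L1 ! a' \<Longrightarrow>
           conf M L2 a = conf M L1 a' \<and> pay M L2 a = pay M L1 a'"
proof -
  obtain \<sigma> where \<sigma>: "\<sigma> permutes {..<length L1}" and L2: "L2 = permute_list \<sigma> L1"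
    using mset_eq_permutation[of L2 L1] mset_eq by metis
  show "rev M L2 = rev M L1"
    using tfm_wf_outcome_permute(1)[OF wf L1 \<sigma>] L2 by simp
  assume a: "a < length L2" "a' < length L1" "L2 ! a = L1 ! a'"
  have "\<sigma> a < length L1" and "L1 ! \<sigma> a = L1 ! a'"
    using a L2 permutes_in_image[OF \<sigma>] permute_list_nth[OF \<sigma>] by auto
  then show "conf M L2 a = conf M L1 a' \<and> pay M L2 a = pay M L1 a'"
    using tfm_wf_outcome_permute(2,3)[OF wf L1 \<sigma>, of a]
      outcome_equal_bids[OF wf L1, of "\<sigma> a" a'] a L2
    by simp
qed

lemma outcome_at_image_mset_eq:
  assumes wf: "tfm_wf M" and c1: "valid_bids c1"
    and S1: "S1 \<subseteq> {..<length c1}" "card S1 \<le> blk M" and S2: "S2 \<subseteq> {..<length c2}"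
    and mset_eq: "image_mset (nth c1) (mset_set S1) = image_mset (nth c2) (mset_set S2)"
  shows "rev_at M c2 S2 = rev_at M c1 S1"
    and "t1 \<in> S1 \<Longrightarrow> t2 \<in> S2 \<Longrightarrow> c1 ! t1 = c2 ! t2 \<Longrightarrow>
         conf_at M c2 S2 t2 = conf_at M c1 S1 t1 \<and> pay_at M c2 S2 t2 = pay_at M c1 S1 t1"
proof -
  have fin: "finite S1" "finite S2"
    using S1(1) S2 finite_subset by blast+
  have L1: "valid_bids (incl_list c1 S1)" "length (incl_list c1 S1) \<le> blk M"
    using valid_bids_incl_list[OF c1 S1(1)] S1(2) by simp_all
  have L_eq: "mset (incl_list c1 S1) = mset (incl_list c2 S2)"
    using mset_eq fin by (simp add: mset_incl_list)
  show "rev_at M c2 S2 = rev_at M c1 S1"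
    unfolding rev_at_def using outcome_mset_eq(1)[OF wf L1 L_eq] .
  assume t: "t1 \<in> S1" "t2 \<in> S2" "c1 ! t1 = c2 ! t2"
  then show "conf_at M c2 S2 t2 = conf_at M c1 S1 t1 \<and> pay_at M c2 S2 t2 = pay_at M c1 S1 t1"
    using outcome_mset_eq(2)[OF wf L1 L_eq, of "pos_in S2 t2" "pos_in S1 t1"]
      nth_incl_list_pos_in[OF fin(1) t(1), of c1] nth_incl_list_pos_in[OF fin(2) t(2), of c2]
    by (simp add: conf_at_def pay_at_def)
qed

lemma outcome_at_relabel:
  assumes wf: "tfm_wf M" and c: "valid_bids c"
    and S: "S \<subseteq> {..<length c}" "card S \<le> blk M"
    and \<sigma>: "inj \<sigma>" "\<sigma> ` S \<subseteq> {..<length d}" and d: "\<And>t. t \<in> S \<Longrightarrow> d ! \<sigma> t = c ! t"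
  shows "rev_at M d (\<sigma> ` S) = rev_at M c S"
    and "conf_at M d (\<sigma> ` S) (\<sigma> t) = conf_at M c S t"
    and "pay_at M d (\<sigma> ` S) (\<sigma> t) = pay_at M c S t"
proof -
  have "image_mset (nth d) (mset_set (\<sigma> ` S)) = image_mset (nth d \<circ> \<sigma>) (mset_set S)"
    using image_mset_mset_set[OF inj_on_subset[OF \<sigma>(1)], of S] by (simp flip: image_mset.comp)
  also have "\<dots> = image_mset (nth c) (mset_set S)"
    using S(1) d by (intro image_mset_cong) (auto simp: finite_subset)
  finally have "image_mset (nth c) (mset_set S) = image_mset (nth d) (mset_set (\<sigma> ` S))"
    by (rule sym)
  note eq = outcome_at_image_mset_eq[OF wf c S \<sigma>(2) this]
  show "rev_at M d (\<sigma> ` S) = rev_at M c S"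
    using eq(1) .
  have "conf_at M d (\<sigma> ` S) (\<sigma> t) = conf_at M c S t \<and> pay_at M d (\<sigma> ` S) (\<sigma> t) = pay_at M c S t"
  proof (cases "t \<in> S")
    case True
    then show ?thesis using eq(2)[of t "\<sigma> t"] d by simp
  next
    case False
    then show ?thesis using inj_image_mem_iff[OF \<sigma>(1)] by (simp add: conf_at_def pay_at_def)
  qed
  then show "conf_at M d (\<sigma> ` S) (\<sigma> t) = conf_at M c S t"
    "pay_at M d (\<sigma> ` S) (\<sigma> t) = pay_at M c S t" by simp_all
qed

lemma ppay_unconfirmed: "\<not> xconf M c l \<Longrightarrow> ppay M c l = 0"
  by (simp add: ppay_def pay_at_def xconf_def)

lemma ppay_le_bid:
  assumes wf: "tfm_wf M" and c: "valid_bids c" and l: "l < length c"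
  shows "ppay M c l \<le> c ! l"
proof (cases "xconf M c l")
  case True
  let ?S = "incl M c"
  have S: "?S \<subseteq> {..<length c}" "card ?S \<le> blk M"
    using tfm_wf_incl[OF wf c] by simp_all
  have "l \<in> ?S" using True by (simp add: xconf_def conf_at_def)
  note pos = nth_incl_list_pos_in[OF finite_subset[OF S(1)] this, of c]
  have "pay M (incl_list c ?S) (pos_in ?S l) \<le> c ! l"
    using tfm_wf_pay_le_bid[OF wf valid_bids_incl_list[OF c S(1)] _ pos(1)] S(2) pos(2) by simp
  then show ?thesis using True by (simp add: ppay_def pay_at_def xconf_def)
qed (use c l in \<open>simp add: ppay_unconfirmed valid_bids_nth_nonneg\<close>)

lemma xconf_ppay_equal_bids:
  assumes wf: "tfm_wf M" and c: "valid_bids c" and l: "l < length c" "l' < length c"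
    and bids: "c ! l = c ! l'" and conf: "xconf M c l"
  shows "xconf M c l'" and "ppay M c l' = ppay M c l"
proof -
  let ?S = "incl M c"
  have \<sigma>: "transpose l l' permutes {..<length c}"
    using l by (intro permutes_swap_id) auto
  have S: "?S \<subseteq> {..<length c}" "card ?S \<le> blk M"
    using tfm_wf_incl[OF wf c] by simp_all
  have lS: "l \<in> ?S" using conf by (simp add: xconf_def conf_at_def)
  moreover have "?S = {i. i < length c \<and> transpose l l' i \<in> ?S}"
    using tfm_wf_incl_permute[OF wf c \<sigma>] permute_list_transpose_eq[OF l bids] by simp
  ultimately have "l' \<in> ?S"
    using l by (metis (no_types, lifting) mem_Collect_eq transpose_apply_second)
  then have "conf_at M c ?S l' = conf_at M c ?S l \<and> pay_at M c ?S l' = pay_at M c ?S l"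
    using outcome_at_image_mset_eq(2)[OF wf c S S(1) refl lS] bids by simp
  then show "xconf M c l'" "ppay M c l' = ppay M c l"
    using conf by (simp_all add: xconf_def ppay_def)
qed

definition joint_util :: "tfm \<Rightarrow> (nat \<Rightarrow> real) \<Rightarrow> nat set \<Rightarrow> real list \<Rightarrow> real" where
  "joint_util M v C c = mu M c + (\<Sum>t\<in>C. tx_util (v t) (c ! t) (xconf M c t) (ppay M c t))"

lemma tx_util_confirmed [simp]: "tx_util v bid True p = v - p"
  by (simp add: tx_util_def)

lemma true_vals_nth [simp]: "t < length c \<Longrightarrow> true_vals c t = c ! t"
  by (simp add: true_vals_def)

lemma weak_util_honest:
  "weak_util M miner v T c (incl M c) =
     (if miner then mu M c else 0) + (\<Sum>t\<in>T. tx_util (v t) (c ! t) (xconf M c t) (ppay M c t))"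
  by (simp add: weak_util_def mu_def xconf_def ppay_def)

lemma deviate_eq_append:
  assumes "length c' = length c" "\<forall>t<length c. t \<notin> C \<longrightarrow> c' ! t = c ! t"
  shows "deviate c C (\<lambda>t. if t < length c' then c' ! t else 0) f = c' @ f"
proof -
  have "map (\<lambda>t. if t \<in> C then (if t < length c' then c' ! t else 0) else c ! t) [0..<length c] = c'"
    using assms by (intro nth_equalityI) auto
  then show ?thesis by (simp add: deviate_def)
qed

lemma weak_SCP_append_fake:
  assumes sc: "weak_SCP M 2" and c: "valid_bids c"
    and C: "C \<subseteq> {..<length c}" "1 \<le> card C" "card C \<le> 2"
    and c': "valid_bids c'" "length c' = length c" "\<forall>t<length c. t \<notin> C \<longrightarrow> c' ! t = c ! t"
    and f: "valid_bids f" and S: "S \<subseteq> {..<length c + length f}" "card S \<le> blk M"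
  shows "weak_util M True (true_vals c) (C \<union> {length c..<length c + length f}) (c' @ f) S
           \<le> joint_util M (true_vals c) C c"
proof -
  let ?d = "\<lambda>t. if t < length c' then c' ! t else 0"
  have "\<forall>t. 0 \<le> ?d t"
    using c'(1) by (simp add: valid_bids_nth_nonneg)
  then show ?thesis
    using sc[unfolded weak_SCP_def, rule_format, of c C ?d f S] c C f S c'(2)
      deviate_eq_append[OF c'(2,3)]
    by (simp add: weak_util_honest joint_util_def)
qed

lemma weak_SCP_joint_util:
  assumes wf: "tfm_wf M" and sc: "weak_SCP M 2" and c: "valid_bids c"
    and C: "C \<subseteq> {..<length c}" "1 \<le> card C" "card C \<le> 2"
    and c': "valid_bids c'" "length c' = length c" "\<forall>t<length c. t \<notin> C \<longrightarrow> c' ! t = c ! t"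
  shows "joint_util M (true_vals c) C c' \<le> joint_util M (true_vals c) C c"
  using weak_SCP_append_fake[OF sc c C c', of "[]" "incl M c'"] tfm_wf_incl[OF wf c'(1)] c'(2)
  by (simp add: valid_bids_def weak_util_honest joint_util_def)

lemma weak_UIC_tx_util:
  assumes uic: "weak_UIC M" and c: "valid_bids c" and l: "l < length c" and y: "0 \<le> y"
  shows "tx_util (c ! l) y (xconf M (c[l := y]) l) (ppay M (c[l := y]) l)
           \<le> tx_util (c ! l) (c ! l) (xconf M c l) (ppay M c l)"
proof -
  have "deviate c {l} (\<lambda>_. y) [] = c[l := y]"
    by (auto simp: deviate_def nth_list_update intro: nth_equalityI)
  then show ?thesis
    using uic[unfolded weak_UIC_def, rule_format, of c l "\<lambda>_. y" "[]"] c l y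
    by (simp add: valid_bids_def weak_util_honest Let_def)
qed

lemma weak_UIC_ppay_stable:
  assumes uic: "weak_UIC M" and c: "valid_bids c" and l: "l < length c" and y: "0 \<le> y"
    and conf: "xconf M c l" "xconf M (c[l := y]) l"
  shows "ppay M (c[l := y]) l = ppay M c l"
proof -
  have "valid_bids (c[l := y])" using valid_bids_update[OF c y] .
  from weak_UIC_tx_util[OF uic this, of l "c ! l"]
  have "y - ppay M c l \<le> y - ppay M (c[l := y]) l"
    using l conf valid_bids_nth_nonneg[OF c l] by simp
  moreover have "c ! l - ppay M (c[l := y]) l \<le> c ! l - ppay M c l"
    using weak_UIC_tx_util[OF uic c l y] conf by simp
  ultimately show ?thesis by linarith
qed

lemma weak_UIC_xconf_raise:
  assumes wf: "tfm_wf M" and uic: "weak_UIC M" and c: "valid_bids c" and l: "l < length c"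
    and conf: "xconf M c l" and raise: "c ! l \<le> y"
  shows "xconf M (c[l := y]) l"
proof (rule ccontr)
  assume unconf: "\<not> xconf M (c[l := y]) l"
  have "valid_bids (c[l := y])"
    using valid_bids_update[OF c] valid_bids_nth_nonneg[OF c l] raise by simp
  from weak_UIC_tx_util[OF uic this, of l "c ! l"]
  have "y - ppay M c l \<le> 0"
    using l conf unconf valid_bids_nth_nonneg[OF c l] by (simp add: tx_util_def)
  then have "y = c ! l"
    using ppay_le_bid[OF wf c l] raise by simp
  then show False using conf unconf by simp
qed

lemma ppay_eq_of_bid_le:
  assumes wf: "tfm_wf M" and uic: "weak_UIC M" and sc: "weak_SCP M 2" and c: "valid_bids c"
    and users: "lo < length c" "hi < length c" "lo \<noteq> hi"
    and conf: "xconf M c lo" "xconf M c hi" and bids: "c ! lo \<le> c ! hi"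
  shows "ppay M c hi = ppay M c lo"
proof -
  define c2 where "c2 = c[lo := c ! hi]"
  have c2: "valid_bids c2" "length c2 = length c"
    using valid_bids_update[OF c valid_bids_nth_nonneg[OF c users(2)]] by (simp_all add: c2_def)
  have c2_nth: "c2 ! lo = c ! hi" "c2 ! hi = c ! hi" "\<forall>t<length c. t \<noteq> lo \<longrightarrow> c2 ! t = c ! t"
    using users by (simp_all add: c2_def)
  have conf2: "xconf M c2 lo"
    using weak_UIC_xconf_raise[OF wf uic c users(1) conf(1) bids] by (simp add: c2_def)
  have pay2: "ppay M c2 lo = ppay M c lo"
    using weak_UIC_ppay_stable[OF uic c users(1) valid_bids_nth_nonneg[OF c users(2)] conf(1)]
      conf2 by (simp add: c2_def)
  have tie: "xconf M c2 hi" "ppay M c2 hi = ppay M c2 lo"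
    using xconf_ppay_equal_bids[OF wf c2(1) _ _ _ conf2, of hi] users c2 c2_nth by simp_all
  \<comment> \<open>the coalitions with lo alone force mu M c = mu M c2; those with lo and hi then
      compare the payments of lo and hi in both directions\<close>
  have "joint_util M (true_vals c) {lo} c2 \<le> joint_util M (true_vals c) {lo} c"
    "joint_util M (true_vals c2) {lo} c \<le> joint_util M (true_vals c2) {lo} c2"
    "joint_util M (true_vals c) {lo, hi} c2 \<le> joint_util M (true_vals c) {lo, hi} c"
    "joint_util M (true_vals c2) {lo, hi} c \<le> joint_util M (true_vals c2) {lo, hi} c2"
    by (rule weak_SCP_joint_util[OF wf sc]; use c c2 c2_nth users in \<open>auto simp: card_insert_if\<close>)+
  then show ?thesis
    using users conf conf2 pay2 tie c2 c2_nth by (simp add: joint_util_def)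
qed

lemma ppay_eq_of_xconf:
  assumes wf: "tfm_wf M" and uic: "weak_UIC M" and sc: "weak_SCP M 2" and c: "valid_bids c"
    and users: "l < length c" "l' < length c" and conf: "xconf M c l" "xconf M c l'"
  shows "ppay M c l' = ppay M c l"
proof (cases "l = l'")
  case False
  then show ?thesis
    using ppay_eq_of_bid_le[OF wf uic sc c users _ conf]
      ppay_eq_of_bid_le[OF wf uic sc c users(2,1) _ conf(2,1)]
    by (cases "c ! l \<le> c ! l'") auto
qed simp

lemma upay_eq_ppay:
  assumes wf: "tfm_wf M" and uic: "weak_UIC M" and sc: "weak_SCP M 2" and c: "valid_bids c"
    and l: "l < length c" and conf: "xconf M c l"
  shows "upay M c = ppay M c l"
proof -
  have ex: "\<exists>i < length c. xconf M c i" using l conf by blast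
  define s where "s = (SOME i. i < length c \<and> xconf M c i)"
  have "s < length c \<and> xconf M c s"
    unfolding s_def using someI_ex[OF ex] .
  then show ?thesis
    using ppay_eq_of_xconf[OF wf uic sc c _ l _ conf, of s] ex by (simp add: upay_def s_def)
qed

lemma weak_SCP_zero_value_bid:
  assumes wf: "tfm_wf M" and sc: "weak_SCP M 2" and b: "valid_bids b" and k: "k < length b"
  shows "mu M b + tx_util 0 (b ! k) (xconf M b k) (ppay M b k)
           \<le> mu M (b[k := 0]) - ppay M (b[k := 0]) k"
proof -
  have "joint_util M (true_vals (b[k := 0])) {k} b \<le> joint_util M (true_vals (b[k := 0])) {k} (b[k := 0])"
    by (rule weak_SCP_joint_util[OF wf sc valid_bids_update[OF b]]) (use b k in auto)
  then show ?thesis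
    using k ppay_unconfirmed[of M "b[k := 0]" k]
    by (cases "xconf M (b[k := 0]) k") (auto simp: joint_util_def tx_util_def)
qed

lemma xconf_of_zeroed_competitor:
  assumes wf: "tfm_wf M" and sc: "weak_SCP M 2" and b: "valid_bids b"
    and users: "k < length b" "i < length b" "i \<noteq> k"
    and conf: "xconf M (b[k := 0]) i" and gain: "b ! i - ppay M (b[k := 0]) i > b ! k"
  shows "xconf M b i"
proof -
  let ?b' = "b[k := 0]"
  have "joint_util M (true_vals b) {i, k} ?b' \<le> joint_util M (true_vals b) {i, k} b"
    by (rule weak_SCP_joint_util[OF wf sc b]) (use b users valid_bids_update[OF b] in auto)
  then have "mu M ?b' + (b ! i - ppay M ?b' i) - ppay M ?b' k
      \<le> mu M b + tx_util (b ! i) (b ! i) (xconf M b i) (ppay M b i)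
          + tx_util 0 (b ! k) (xconf M b k) (ppay M b k) + b ! k"
    using users conf ppay_unconfirmed[of M ?b' k] valid_bids_nth_nonneg[OF b users(1)]
    by (cases "xconf M ?b' k"; cases "xconf M b k") (auto simp: joint_util_def tx_util_def)
  then have "tx_util (b ! i) (b ! i) (xconf M b i) (ppay M b i) > 0"
    using weak_SCP_zero_value_bid[OF wf sc b users(1)] gain by linarith
  then show ?thesis by (auto simp: tx_util_def split: if_splits)
qed

lemma joint_util_ge_of_fake_bid:
  assumes wf: "tfm_wf M" and sc: "weak_SCP M 2" and b: "valid_bids b"
    and users: "k < length b" "i < length b" "j < length b" "i \<noteq> j" "i \<noteq> k" "j \<noteq> k"
    and conf: "xconf M (b[k := 0]) i" "xconf M (b[k := 0]) j"
  shows "mu M (b[k := 0]) + (b ! i - ppay M (b[k := 0]) i) + (b ! j - ppay M (b[k := 0]) j)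
           - ppay M (b[k := 0]) k \<le> joint_util M (true_vals b) {i, j} b"
proof -
  let ?b' = "b[k := 0]" and ?c = "b @ [0]" and ?m = "length b"
  let ?\<sigma> = "transpose k ?m" and ?S0 = "incl M ?b'"
  have b': "valid_bids ?b'" using valid_bids_update[OF b] by simp
  have S0: "?S0 \<subseteq> {..<length ?b'}" "card ?S0 \<le> blk M"
    using tfm_wf_incl[OF wf b'] by simp_all
  have S: "?\<sigma> ` ?S0 \<subseteq> {..<length ?c}" "card (?\<sigma> ` ?S0) \<le> blk M"
    using S0 users(1) card_image[OF inj_on_transpose, of k ?m ?S0] by (auto simp: transpose_def)
  have "?c ! ?\<sigma> t = ?b' ! t" if "t \<in> ?S0" for t
    using that S0(1) users(1) by (auto simp: transpose_def nth_append)
  \<comment> \<open>including a fake bid 0 in place of k's bid 0 reproduces the outcome of b[k := 0]\<close>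
  note relabel = outcome_at_relabel[OF wf b' S0 inj_transpose S(1) this]
  let ?S = "?\<sigma> ` ?S0"
  have outcome: "rev_at M ?c ?S = mu M ?b'"
    "conf_at M ?c ?S i" "pay_at M ?c ?S i = ppay M ?b' i"
    "conf_at M ?c ?S j" "pay_at M ?c ?S j = ppay M ?b' j"
    "pay_at M ?c ?S ?m = ppay M ?b' k"
    using relabel(1) relabel(2,3)[of i] relabel(2,3)[of j] relabel(3)[of k] users conf
    by (simp_all add: mu_def xconf_def ppay_def)
  have fake_util: "tx_util 0 0 (conf_at M ?c ?S ?m) (pay_at M ?c ?S ?m) = - ppay M ?b' k"
    unfolding outcome(6)[symmetric] by (simp add: tx_util_def pay_at_def)
  have "weak_util M True (true_vals b) ({i, j} \<union> {?m..<?m + length [0::real]}) ?c ?S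
          \<le> joint_util M (true_vals b) {i, j} b"
    by (rule weak_SCP_append_fake[OF sc b]) (use b users S in \<open>auto simp: valid_bids_def\<close>)
  moreover have "{i, j} \<union> {?m..<?m + length [0::real]} = {i, j, ?m}"
    by auto
  ultimately show ?thesis
    using outcome fake_util users by (simp add: weak_util_def true_vals_def nth_append)
qed

theorem mainTheorem18:
  fixes M :: tfm and b :: "real list" and i j k :: nat
  assumes "tfm_wf M" and "weak_UIC M" and "weak_SCP M 2"
    and "valid_bids b"
    and "i < length b" and "j < length b" and "k < length b"
    and "i \<noteq> j" and "i \<noteq> k" and "j \<noteq> k"
    and "xconf M (b[k := 0]) i" and "xconf M (b[k := 0]) j"
    and "b ! i - upay M (b[k := 0]) > b ! k"
    and "b ! j - upay M (b[k := 0]) > b ! k"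
  shows "xconf M b i \<and> xconf M b j \<and> upay M b \<le> upay M (b[k := 0]) + b ! k / 2"
proof -
  note wf = assms(1) and uic = assms(2) and sc = assms(3) and b = assms(4)
    and users = assms(7,5,6,8-10) and conf' = assms(11,12) and gain = assms(13,14)
  let ?b' = "b[k := 0]"
  have b': "valid_bids ?b'" using valid_bids_update[OF b] by simp
  have pay': "ppay M ?b' i = upay M ?b'" "ppay M ?b' j = upay M ?b'"
    using upay_eq_ppay[OF wf uic sc b' _ conf'(1)] upay_eq_ppay[OF wf uic sc b' _ conf'(2)] users
    by simp_all
  have conf: "xconf M b i" "xconf M b j"
    using xconf_of_zeroed_competitor[OF wf sc b] users conf' gain pay' by simp_all
  have pay: "ppay M b i = upay M b" "ppay M b j = upay M b"
    using upay_eq_ppay[OF wf uic sc b _ conf(1)] upay_eq_ppay[OF wf uic sc b _ conf(2)] users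
    by simp_all
  have "mu M ?b' + (b ! i - upay M ?b') + (b ! j - upay M ?b') - ppay M ?b' k
      \<le> mu M b + (b ! i - upay M b) + (b ! j - upay M b)"
    using joint_util_ge_of_fake_bid[OF wf sc b users conf'] pay' pay conf users
    by (simp add: joint_util_def)
  moreover have "mu M b + tx_util 0 (b ! k) (xconf M b k) (ppay M b k) \<le> mu M ?b' - ppay M ?b' k"
    using weak_SCP_zero_value_bid[OF wf sc b users(1)] .
  moreover have "upay M b = ppay M b k \<and> ppay M b k \<le> b ! k" if "xconf M b k"
    using upay_eq_ppay[OF wf uic sc b users(1) that] ppay_le_bid[OF wf b users(1)] by simp
  ultimately have "upay M b \<le> upay M ?b' + b ! k / 2"
    using valid_bids_nth_nonneg[OF b users(1)]
    by (cases "xconf M b k") (auto simp: tx_util_def)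
  with conf show ?thesis by simp
qed

end
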